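(* Let $A\in M_n(\mathbb{C})$, $x\in\mathbb{C}S^n$, and let $B_r$ be a ball of radius $r>0$ centered at $x$ in $\mathbb{C}^n$. Then $f_A(\mathbb{C}S^n\cap B_r)$ is a convex subset of $\mathbb{C}$.
   Context: $\mathbb{C}S^n$ is the unit sphere of $\mathbb{C}^n$ and $f_A(y)=y^*Ay$. *)

theory Defs
  imports "HOL-Analysis.Analysis"
begin

definition csphere :: "(complex ^ 'n) set" where
  "csphere = {y. norm y = 1}"

definition fA :: "complex ^ 'n ^ 'n \<Rightarrow> complex ^ 'n \<Rightarrow> complex" where
  "fA A y = (\<Sum>i\<in>UNIV. cnj (y $ i) * ((A *v y) $ i))"

end

theory Submission
  imports Defs
begin

text \<open>For unit vectors \<open>u\<close>, \<open>v\<close>, every point \<open>(1 - t) f\<^sub>A(u) + t f\<^sub>A(v)\<close> is attained at a unit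
  vector \<open>y\<close> in the span of \<open>u\<close> and \<open>v\<close> with
  \<open>|\<langle>x, y\<rangle>|\<^sup>2 \<ge> (1 - t) |\<langle>x, u\<rangle>|\<^sup>2 + t |\<langle>x, v\<rangle>|\<^sup>2\<close>.
  Writing \<open>y = z\<^sub>1 u + z\<^sub>2 v\<close>, the quantities \<open>|y|\<^sup>2\<close>, \<open>f\<^sub>A(y)\<close> and \<open>|\<langle>x, y\<rangle>|\<^sup>2\<close> are real-linear
  in the rank-one Hermitian matrix \<open>z z\<^sup>*\<close>. Starting from \<open>diag (1 - t, t)\<close>, move along a
  Hermitian direction that fixes \<open>|y|\<^sup>2\<close> and \<open>f\<^sub>A(y)\<close> and has negative determinant (three real
  conditions on four real unknowns). The determinant along this line is a concave quadratic,
  nonnegative at the start, so it vanishes on both sides; stop on the side where \<open>|\<langle>x, y\<rangle>|\<^sup>2\<close>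
  does not decrease. Finally, \<open>f\<^sub>A\<close> is invariant under unimodular scalars, so on the sphere the
  ball \<open>B\<^sub>r(x)\<close> may be replaced by the condition \<open>|\<langle>x, y\<rangle>| > 1 - r\<^sup>2/2\<close>, which the
  interpolation preserves.\<close>

lemma cnj_mult_self: "cnj z * z = of_real ((cmod z)\<^sup>2)"
  by (metis complex_norm_square mult.commute)

lemma cnj_sgn_mult_self: "cnj (sgn z) * z = of_real (cmod z)"
proof (cases "z = 0")
  case False
  have "cnj (sgn z) * z = (cnj z * z) / of_real (cmod z)"
    by (simp add: sgn_div_norm scaleR_conv_of_real field_simps)
  also have "\<dots> = of_real (cmod z)"
    using False by (simp add: cnj_mult_self power2_eq_square)
  finally show ?thesis .
qed simp

lemma exists_null_direction:
  fixes g a b m12 m21 :: complex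
  assumes g: "cmod g < 1" and ab: "a \<noteq> b"
  obtains dp ds :: real and dq :: complex
  where "dp + ds + 2 * Re (dq * g) = 0"
    and "of_real dp * a + dq * m12 + cnj dq * m21 + of_real ds * b = 0"
    and "dp * ds < (cmod dq)\<^sup>2"
proof -
  \<comment> \<open>Eliminating \<open>dp\<close> via the first equation turns the second into \<open>(b - a) ds = - N dq\<close>;
    \<open>N\<close> is only real-linear, so some \<open>dq \<noteq> 0\<close> makes \<open>N dq / (b - a)\<close> real.\<close>
  define N where "N q = q * m12 + cnj q * m21 - 2 * a * of_real (Re (q * g))" for q
  define L where "L q = N q / (b - a)" for q
  have N_real_linear: "N q = of_real (Re q) * N 1 + of_real (Im q) * N \<i>" for q
    by (simp add: N_def complex_eq_iff algebra_simps)
  have L_real_linear: "L q = of_real (Re q) * L 1 + of_real (Im q) * L \<i>" for q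
    unfolding L_def by (subst N_real_linear) (simp add: add_divide_distrib)
  obtain dq where dq: "dq \<noteq> 0" "Im (L dq) = 0"
  proof (cases "Im (L 1) = 0 \<and> Im (L \<i>) = 0")
    case True
    then show ?thesis
      by (intro that[of 1]) simp_all
  next
    case False
    then show ?thesis
      by (intro that[of "Complex (Im (L \<i>)) (- Im (L 1))"])
        (auto simp: complex_eq_iff L_real_linear[of "Complex _ _"] algebra_simps)
  qed
  define ds where "ds = - Re (L dq)"
  define dp where "dp = - ds - 2 * Re (dq * g)"
  have "L dq = - of_real ds"
    using dq(2) by (simp add: ds_def complex_eq_iff)
  then have "of_real dp * a + dq * m12 + cnj dq * m21 + of_real ds * b = 0"
    using ab by (simp add: L_def N_def dp_def field_simps)
  moreover have "dp * ds < (cmod dq)\<^sup>2"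
  proof -
    have "\<bar>Re (dq * g)\<bar> \<le> cmod dq * cmod g"
      by (metis abs_Re_le_cmod norm_mult)
    also have "\<dots> < cmod dq"
      using g dq(1) by simp
    finally have "\<bar>dp + ds\<bar> < 2 * cmod dq"
      by (simp add: dp_def)
    then have "(dp + ds)\<^sup>2 < 4 * (cmod dq)\<^sup>2"
      using power_strict_mono[of "\<bar>dp + ds\<bar>" "2 * cmod dq" 2] by (simp add: power_mult_distrib)
    moreover have "4 * (dp * ds) \<le> (dp + ds)\<^sup>2"
      using sum_squares_ge_zero[of "dp - ds" 0] by (simp add: power2_eq_square algebra_simps)
    ultimately show ?thesis
      by linarith
  qed
  moreover have "dp + ds + 2 * Re (dq * g) = 0"
    by (simp add: dp_def)
  ultimately show thesis
    using that by blast
qed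

lemma exists_quadratic_root_signed:
  fixes k B C P :: real
  assumes k: "k < 0" and C: "0 \<le> C"
  obtains s where "k * s\<^sup>2 + B * s + C = 0" and "0 \<le> s * P"
proof -
  define S where "S = sqrt (B\<^sup>2 - 4 * k * C)"
  have "4 * k * C \<le> 0"
    using mult_nonpos_nonneg[of "4 * k" C] k C by simp
  then have disc: "0 \<le> B\<^sup>2 - 4 * k * C"
    using zero_le_power2[of B] by linarith
  have S2: "S\<^sup>2 = B\<^sup>2 - 4 * k * C"
    using disc by (simp add: S_def)
  have "\<bar>B\<bar> \<le> S"
    using disc k C unfolding S_def by (intro real_le_rsqrt) (simp add: mult_nonpos_nonneg)
  have root: "k * s\<^sup>2 + B * s + C = 0" if "s = (- B + e * S) / (2 * k)" "e\<^sup>2 = 1" for s e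
  proof -
    have "4 * k * (k * s\<^sup>2 + B * s + C) = (2 * k * s + B)\<^sup>2 - S\<^sup>2"
      using S2 by (simp add: power2_eq_square algebra_simps)
    also have "\<dots> = 0"
      using that k by (simp add: power_mult_distrib)
    finally show ?thesis
      using k by simp
  qed
  define s1 where "s1 = (- B - S) / (2 * k)"
  define s2 where "s2 = (- B + S) / (2 * k)"
  have "k * s1\<^sup>2 + B * s1 + C = 0"
    by (rule root[of _ "-1"]) (simp_all add: s1_def)
  moreover have "k * s2\<^sup>2 + B * s2 + C = 0"
    by (rule root[of _ 1]) (simp_all add: s2_def)
  moreover have "0 \<le> s1" "s2 \<le> 0"
    using k \<open>\<bar>B\<bar> \<le> S\<close> unfolding s1_def s2_def
    by (auto intro: divide_nonpos_neg divide_nonneg_neg)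
  ultimately show thesis
    using that by (cases "0 \<le> P") (auto simp: mult_nonpos_nonpos)
qed

lemma exists_rank_one_on_line:
  fixes t dp ds P :: real and dq :: complex
  assumes "0 \<le> t" "t \<le> 1" "dp * ds < (cmod dq)\<^sup>2"
  obtains \<sigma> where "(1 - t + \<sigma> * dp) * (t + \<sigma> * ds) = (cmod (of_real \<sigma> * dq))\<^sup>2"
    and "0 \<le> \<sigma> * P"
proof -
  obtain \<sigma> where \<sigma>: "(dp * ds - (cmod dq)\<^sup>2) * \<sigma>\<^sup>2 + ((1 - t) * ds + t * dp) * \<sigma> + t * (1 - t) = 0"
    and "0 \<le> \<sigma> * P"
    using assms exists_quadratic_root_signed[of "dp * ds - (cmod dq)\<^sup>2" "t * (1 - t)"]
    by (metis diff_ge_0_iff_ge diff_less_eq add_0 mult_nonneg_nonneg)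
  moreover have "(1 - t + \<sigma> * dp) * (t + \<sigma> * ds) - (cmod (of_real \<sigma> * dq))\<^sup>2 =
      (dp * ds - (cmod dq)\<^sup>2) * \<sigma>\<^sup>2 + ((1 - t) * ds + t * dp) * \<sigma> + t * (1 - t)"
    by (simp add: norm_mult power_mult_distrib power2_eq_square algebra_simps)
  ultimately show thesis
    using that by simp
qed

lemma rank_one_nonneg:
  fixes p s :: real and q g :: complex
  assumes "p * s = (cmod q)\<^sup>2" and "p + s + 2 * Re (q * g) = 1" and "cmod g \<le> 1"
  shows "0 \<le> p" and "0 \<le> s"
proof -
  have "(cmod q)\<^sup>2 \<le> ((p + s) / 2)\<^sup>2"
    using assms(1) sum_squares_ge_zero[of "p - s" 0] by (simp add: power2_eq_square field_simps)
  then have "2 * cmod q \<le> \<bar>p + s\<bar>"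
    using abs_le_square_iff[of "cmod q" "(p + s) / 2"] by simp
  moreover have "Re (q * g) \<le> cmod q"
    using complex_Re_le_cmod[of "q * g"] assms(3)
    by (metis mult_left_le norm_ge_zero norm_mult order_trans)
  ultimately have "0 < p + s"
    using assms(2) by linarith
  moreover have "0 \<le> p * s"
    using assms(1) by simp
  ultimately show "0 \<le> p" "0 \<le> s"
    by (smt (verit) mult_nonneg_nonneg mult_nonpos_nonpos zero_le_mult_iff)+
qed

lemma rank_one_factorization:
  fixes p s :: real and q :: complex
  assumes "0 \<le> p" "0 \<le> s" "p * s = (cmod q)\<^sup>2"
  obtains z1 z2 where "(cmod z1)\<^sup>2 = p" "(cmod z2)\<^sup>2 = s" "cnj z1 * z2 = q"
proof (cases "p = 0")
  case True
  then have "q = 0"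
    using assms(3) by simp
  then show thesis
    using True assms(2) by (intro that[of 0 "of_real (sqrt s)"]) simp_all
next
  case False
  then have "0 < p"
    using assms(1) by simp
  then show thesis
    using assms(3)
    by (intro that[of "of_real (sqrt p)" "q / of_real (sqrt p)"])
      (simp_all add: norm_divide power_divide field_simps)
qed

definition cinner :: "complex ^ 'n \<Rightarrow> complex ^ 'n \<Rightarrow> complex" where
  "cinner u v = (\<Sum>i\<in>UNIV. cnj (u $ i) * v $ i)"

lemma cinner_add_left: "cinner (u + v) w = cinner u w + cinner v w"
  by (simp add: cinner_def sum.distrib algebra_simps)

lemma cinner_add_right: "cinner w (u + v) = cinner w u + cinner w v"
  by (simp add: cinner_def sum.distrib algebra_simps)

lemma cinner_scale_left: "cinner (c *s u) v = cnj c * cinner u v"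
  by (simp add: cinner_def sum_distrib_left algebra_simps)

lemma cinner_scale_right: "cinner u (c *s v) = c * cinner u v"
  by (simp add: cinner_def sum_distrib_left algebra_simps)

lemma cinner_commute: "cinner v u = cnj (cinner u v)"
  by (simp add: cinner_def mult.commute)

lemma Re_cinner: "Re (cinner u v) = inner u v"
  by (simp add: cinner_def inner_vec_def inner_complex_def Re_sum)

lemma cinner_self: "cinner y y = of_real ((norm y)\<^sup>2)"
  by (simp add: complex_eq_iff Re_cinner power2_norm_eq_inner) (simp add: cinner_def Im_sum)

lemma norm_scale_unimodular:
  fixes y :: "complex ^ 'n"
  assumes "cmod c = 1"
  shows "norm (c *s y) = norm y"
  using assms by (simp add: norm_vec_def norm_mult)

definition outer :: "complex ^ 'n \<Rightarrow> complex ^ 'n ^ 'n" where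
  "outer x = (\<chi> i j. x $ i * cnj (x $ j))"

lemma fA_eq_cinner: "fA M y = cinner y (M *v y)"
  by (simp add: fA_def cinner_def)

lemma fA_mat_1: "fA (mat 1) y = of_real ((norm y)\<^sup>2)"
  by (simp add: fA_eq_cinner cinner_self)

lemma fA_outer: "fA (outer x) y = of_real ((cmod (cinner x y))\<^sup>2)"
proof -
  have "outer x *v y = cinner x y *s x"
    by (simp add: vec_eq_iff outer_def matrix_vector_mult_def cinner_def sum_distrib_left mult_ac)
  then show ?thesis
    by (simp add: fA_eq_cinner cinner_scale_right cinner_commute[of y x] flip: of_real_power complex_norm_square)
qed

lemma fA_scale: "fA M (c *s y) = of_real ((cmod c)\<^sup>2) * fA M y"
  by (simp add: fA_eq_cinner vector_scalar_commute cinner_scale_left cinner_scale_right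
      flip: of_real_power complex_norm_square)

text \<open>\<open>compression_trace p s q M u v\<close> is \<open>tr (P N)\<close> for the Hermitian matrix
  \<open>P = [[p, cnj q], [q, s]]\<close> and the compression \<open>N = [[\<langle>u, M u\<rangle>, \<langle>u, M v\<rangle>], [\<langle>v, M u\<rangle>, \<langle>v, M v\<rangle>]]\<close>
  of \<open>M\<close> to \<open>u, v\<close>.\<close>

definition compression_trace ::
    "real \<Rightarrow> real \<Rightarrow> complex \<Rightarrow> complex ^ 'n ^ 'n \<Rightarrow> complex ^ 'n \<Rightarrow> complex ^ 'n \<Rightarrow> complex" where
  "compression_trace p s q M u v =
     of_real p * fA M u + q * cinner u (M *v v) + cnj q * cinner v (M *v u) + of_real s * fA M v"

lemma fA_combination:
  "fA M (z1 *s u + z2 *s v) = compression_trace ((cmod z1)\<^sup>2) ((cmod z2)\<^sup>2) (cnj z1 * z2) M u v"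
  unfolding compression_trace_def cnj_mult_self[symmetric]
  by (simp add: fA_eq_cinner matrix_vector_right_distrib vector_scalar_commute
      cinner_add_left cinner_add_right cinner_scale_left cinner_scale_right algebra_simps)

lemma compression_trace_affine:
  "compression_trace (p + \<sigma> * p') (s + \<sigma> * s') (q + of_real \<sigma> * q') M u v =
     compression_trace p s q M u v + of_real \<sigma> * compression_trace p' s' q' M u v"
  by (simp add: compression_trace_def algebra_simps)

lemma compression_trace_diagonal:
  "compression_trace (1 - t) t 0 M u v = (1 - t) *\<^sub>R fA M u + t *\<^sub>R fA M v"
  by (simp add: compression_trace_def scaleR_conv_of_real)

lemma compression_trace_mat_1:
  assumes "norm u = 1" "norm v = 1"
  shows "compression_trace p s q (mat 1) u v = of_real (p + s + 2 * Re (q * cinner u v))"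
proof -
  have "q * cinner u v + cnj (q * cinner u v) = of_real (2 * Re (q * cinner u v))"
    by (simp add: complex_eq_iff)
  then show ?thesis
    using assms by (simp add: compression_trace_def fA_mat_1 cinner_commute[of v u])
qed

lemma norm_sub_projection:
  fixes u v :: "complex ^ 'n"
  assumes "norm u = 1"
  shows "(norm (v - cinner u v *s u))\<^sup>2 = (norm v)\<^sup>2 - (cmod (cinner u v))\<^sup>2"
proof -
  define g where "g = cinner u v"
  have "of_real ((norm (v - g *s u))\<^sup>2) = fA (mat 1) (1 *s v + (- g) *s u)"
    by (simp add: fA_mat_1 vector_smult_lneg)
  also have "\<dots> = compression_trace 1 ((cmod g)\<^sup>2) (- g) (mat 1) v u"
    unfolding fA_combination by simp
  also have "\<dots> = of_real ((norm v)\<^sup>2 - (cmod g)\<^sup>2)"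
    using assms
    by (simp add: compression_trace_def fA_mat_1 cinner_commute[of v u] g_def cnj_mult_self
        flip: of_real_power complex_norm_square)
  finally show ?thesis
    unfolding g_def of_real_eq_iff .
qed

lemma exists_unit_interpolant_independent:
  fixes A :: "complex ^ 'n ^ 'n" and x u v :: "complex ^ 'n"
  assumes u: "norm u = 1" and v: "norm v = 1" and g: "cmod (cinner u v) < 1"
    and distinct: "fA A u \<noteq> fA A v" and t: "0 \<le> t" "t \<le> 1"
  obtains y where "norm y = 1" and "fA A y = (1 - t) *\<^sub>R fA A u + t *\<^sub>R fA A v"
    and "(1 - t) * (cmod (cinner x u))\<^sup>2 + t * (cmod (cinner x v))\<^sup>2 \<le> (cmod (cinner x y))\<^sup>2"
proof -
  obtain dp ds dq where dir_norm: "dp + ds + 2 * Re (dq * cinner u v) = 0"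
    and dir_A: "compression_trace dp ds dq A u v = 0"
    and dir_det: "dp * ds < (cmod dq)\<^sup>2"
    using exists_null_direction[OF g distinct] unfolding compression_trace_def by blast
  obtain \<sigma> where \<sigma>: "(1 - t + \<sigma> * dp) * (t + \<sigma> * ds) = (cmod (of_real \<sigma> * dq))\<^sup>2"
    and \<sigma>_sign: "0 \<le> \<sigma> * Re (compression_trace dp ds dq (outer x) u v)"
    using exists_rank_one_on_line[OF t dir_det] by blast
  define p where "p = 1 - t + \<sigma> * dp"
  define s where "s = t + \<sigma> * ds"
  define q where "q = of_real \<sigma> * dq"
  have trace_pq: "compression_trace p s q M u v =
      (1 - t) *\<^sub>R fA M u + t *\<^sub>R fA M v + of_real \<sigma> * compression_trace dp ds dq M u v" for M
    using compression_trace_affine[of "1 - t" \<sigma> dp t ds 0 dq M u v]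
    by (simp add: p_def s_def q_def compression_trace_diagonal)
  have "p + s + 2 * Re (q * cinner u v) = 1 + \<sigma> * (dp + ds + 2 * Re (dq * cinner u v))"
    by (simp add: p_def s_def q_def algebra_simps)
  then have normalized: "p + s + 2 * Re (q * cinner u v) = 1"
    using dir_norm by simp
  have "0 \<le> p" "0 \<le> s"
    using rank_one_nonneg[OF _ normalized] \<sigma> g by (simp_all add: p_def s_def q_def)
  then obtain z1 z2 where z: "(cmod z1)\<^sup>2 = p" "(cmod z2)\<^sup>2 = s" "cnj z1 * z2 = q"
    using \<sigma> rank_one_factorization by (metis p_def s_def q_def)
  define y where "y = z1 *s u + z2 *s v"
  have fA_y: "fA M y = compression_trace p s q M u v" for M
    by (simp add: y_def fA_combination z)
  show thesis
  proof (rule that)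
    have "of_real ((norm y)\<^sup>2) = (of_real (p + s + 2 * Re (q * cinner u v)) :: complex)"
      using fA_y[of "mat 1"] by (simp only: fA_mat_1 compression_trace_mat_1[OF u v])
    then have "(norm y)\<^sup>2 = 1"
      unfolding normalized of_real_eq_iff .
    then show "norm y = 1"
      using norm_ge_zero[of y] by (auto simp: power2_eq_1_iff)
    show "fA A y = (1 - t) *\<^sub>R fA A u + t *\<^sub>R fA A v"
      using fA_y trace_pq dir_A by simp
    have "(cmod (cinner x y))\<^sup>2 = (1 - t) * (cmod (cinner x u))\<^sup>2 + t * (cmod (cinner x v))\<^sup>2
        + \<sigma> * Re (compression_trace dp ds dq (outer x) u v)"
      using arg_cong[OF fA_y[of "outer x"], of Re] trace_pq[of "outer x"] by (simp add: fA_outer)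
    then show "(1 - t) * (cmod (cinner x u))\<^sup>2 + t * (cmod (cinner x v))\<^sup>2 \<le> (cmod (cinner x y))\<^sup>2"
      using \<sigma>_sign by linarith
  qed
qed

lemma exists_unit_interpolant:
  fixes A :: "complex ^ 'n ^ 'n" and x u v :: "complex ^ 'n"
  assumes u: "norm u = 1" and v: "norm v = 1" and t: "0 \<le> t" "t \<le> 1"
  obtains y where "norm y = 1" and "fA A y = (1 - t) *\<^sub>R fA A u + t *\<^sub>R fA A v"
    and "(1 - t) * (cmod (cinner x u))\<^sup>2 + t * (cmod (cinner x v))\<^sup>2 \<le> (cmod (cinner x y))\<^sup>2"
proof (cases "fA A u = fA A v")
  case True
  obtain y where y: "y = u \<or> y = v"
    and max: "max ((cmod (cinner x u))\<^sup>2) ((cmod (cinner x v))\<^sup>2) = (cmod (cinner x y))\<^sup>2"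
    by (metis max_def)
  show thesis
  proof (rule that)
    show "norm y = 1"
      using y u v by blast
    show "fA A y = (1 - t) *\<^sub>R fA A u + t *\<^sub>R fA A v"
      using y True by (auto simp flip: scaleR_left_distrib)
    show "(1 - t) * (cmod (cinner x u))\<^sup>2 + t * (cmod (cinner x v))\<^sup>2 \<le> (cmod (cinner x y))\<^sup>2"
      unfolding max[symmetric] using t by (intro convex_bound_le) simp_all
  qed
next
  case False
  have "cmod (cinner u v) < 1"
  proof (rule ccontr)
    assume "\<not> cmod (cinner u v) < 1"
    moreover have "0 \<le> 1 - (cmod (cinner u v))\<^sup>2"
      using norm_sub_projection[OF u, of v] v zero_le_power2[of "norm (v - cinner u v *s u)"]
      by simp
    ultimately have g: "cmod (cinner u v) = 1"
      by (simp add: abs_square_le_1)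
    then have "v = cinner u v *s u"
      using norm_sub_projection[OF u, of v] v by simp
    then have "fA A v = fA A u"
      using g by (metis fA_scale of_real_1 one_power2 mult_1)
    with False show False
      by simp
  qed
  then show thesis
    using exists_unit_interpolant_independent[OF u v _ False t] that by blast
qed

lemma convex_fA_image_cinner_superlevel:
  fixes A :: "complex ^ 'n ^ 'n" and x :: "complex ^ 'n" and c :: real
  shows "convex (fA A ` {y \<in> csphere. c < cmod (cinner x y)})"
  unfolding convex_alt
proof (intro ballI allI impI)
  fix w1 w2 :: complex and t :: real
  assume w1: "w1 \<in> fA A ` {y \<in> csphere. c < cmod (cinner x y)}"
    and w2: "w2 \<in> fA A ` {y \<in> csphere. c < cmod (cinner x y)}"
    and t: "0 \<le> t \<and> t \<le> 1"
  obtain u where u: "norm u = 1" "c < cmod (cinner x u)" "w1 = fA A u"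
    using w1 by (auto simp: csphere_def)
  obtain v where v: "norm v = 1" "c < cmod (cinner x v)" "w2 = fA A v"
    using w2 by (auto simp: csphere_def)
  obtain y where y: "norm y = 1" "fA A y = (1 - t) *\<^sub>R w1 + t *\<^sub>R w2"
    and interpolates: "(1 - t) * (cmod (cinner x u))\<^sup>2 + t * (cmod (cinner x v))\<^sup>2 \<le> (cmod (cinner x y))\<^sup>2"
    using exists_unit_interpolant[OF u(1) v(1), of t A x] t u(3) v(3) by blast
  have "c < cmod (cinner x y)"
  proof (cases "c < 0")
    case True
    then show ?thesis
      using norm_ge_zero[of "cinner x y"] by linarith
  next
    case False
    then have "c\<^sup>2 < (cmod (cinner x u))\<^sup>2" "c\<^sup>2 < (cmod (cinner x v))\<^sup>2"
      using u(2) v(2) by (simp_all add: power_strict_mono)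
    then have "c\<^sup>2 < (1 - t) * (cmod (cinner x u))\<^sup>2 + t * (cmod (cinner x v))\<^sup>2"
      using convex_bound_lt[of "- (cmod (cinner x u))\<^sup>2" "- c\<^sup>2" "- (cmod (cinner x v))\<^sup>2" "1 - t" t] t
      by simp
    then have "c\<^sup>2 < (cmod (cinner x y))\<^sup>2"
      using interpolates by linarith
    then show ?thesis
      by (rule power_less_imp_less_base) simp
  qed
  then show "(1 - t) *\<^sub>R w1 + t *\<^sub>R w2 \<in> fA A ` {y \<in> csphere. c < cmod (cinner x y)}"
    using y by (intro image_eqI[of _ _ y]) (simp_all add: csphere_def)
qed

lemma dist_lt_iff_Re_cinner:
  fixes x y :: "complex ^ 'n"
  assumes "norm x = 1" "norm y = 1" "0 < r"
  shows "dist x y < r \<longleftrightarrow> 1 - r\<^sup>2 / 2 < Re (cinner x y)"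
proof -
  have "(dist x y)\<^sup>2 = inner x x + inner y y - 2 * inner x y"
    by (simp add: dist_norm power2_norm_eq_inner inner_diff inner_commute)
  also have "\<dots> = 2 - 2 * Re (cinner x y)"
    using assms by (simp add: dot_square_norm Re_cinner)
  finally have "(dist x y)\<^sup>2 = 2 - 2 * Re (cinner x y)" .
  moreover have "dist x y < r \<longleftrightarrow> (dist x y)\<^sup>2 < r\<^sup>2"
    using assms(3) by (auto intro: power_strict_mono power_less_imp_less_base)
  ultimately show ?thesis
    by linarith
qed

lemma fA_image_sphere_ball:
  fixes A :: "complex ^ 'n ^ 'n" and x :: "complex ^ 'n"
  assumes x: "x \<in> csphere" and r: "0 < r"
  shows "fA A ` (csphere \<inter> ball x r) = fA A ` {y \<in> csphere. 1 - r\<^sup>2 / 2 < cmod (cinner x y)}"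
proof
  show "fA A ` (csphere \<inter> ball x r) \<subseteq> fA A ` {y \<in> csphere. 1 - r\<^sup>2 / 2 < cmod (cinner x y)}"
  proof (rule image_mono, rule subsetI)
    fix y
    assume "y \<in> csphere \<inter> ball x r"
    then have "norm y = 1" "1 - r\<^sup>2 / 2 < Re (cinner x y)"
      using x r by (auto simp: csphere_def dist_lt_iff_Re_cinner)
    then show "y \<in> {y \<in> csphere. 1 - r\<^sup>2 / 2 < cmod (cinner x y)}"
      using complex_Re_le_cmod[of "cinner x y"] by (simp add: csphere_def)
  qed
next
  show "fA A ` {y \<in> csphere. 1 - r\<^sup>2 / 2 < cmod (cinner x y)} \<subseteq> fA A ` (csphere \<inter> ball x r)"
  proof (rule image_subsetI)
    fix y
    assume "y \<in> {y \<in> csphere. 1 - r\<^sup>2 / 2 < cmod (cinner x y)}"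
    then have y: "norm y = 1" and close: "1 - r\<^sup>2 / 2 < cmod (cinner x y)"
      by (simp_all add: csphere_def)
    define \<mu> where "\<mu> = (if cinner x y = 0 then 1 else cnj (sgn (cinner x y)))"
    have \<mu>: "cmod \<mu> = 1" "\<mu> * cinner x y = of_real (cmod (cinner x y))"
      by (simp_all add: \<mu>_def norm_sgn cnj_sgn_mult_self)
    have "\<mu> *s y \<in> csphere \<inter> ball x r"
      using x y r \<mu> close
      by (simp add: csphere_def norm_scale_unimodular dist_lt_iff_Re_cinner cinner_scale_right)
    moreover have "fA A y = fA A (\<mu> *s y)"
      by (simp add: fA_scale \<mu>(1))
    ultimately show "fA A y \<in> fA A ` (csphere \<inter> ball x r)"
      by (rule rev_image_eqI)
  qed
qed

theorem lemma2:
  fixes A :: "complex ^ 'n ^ 'n" and x :: "complex ^ 'n" and r :: real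
  assumes "x \<in> csphere" and "r > 0"
  shows "convex (fA A ` (csphere \<inter> ball x r))"
  unfolding fA_image_sphere_ball[OF assms] by (rule convex_fA_image_cinner_superlevel)

end
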